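(* Let $\mu_1>\mu_2$ be real numbers, $\sigma>0$, $p,q\in[0,1]$, and let $\tilde n_+,\tilde n_-$ be positive integers. Let $I^+_1,\dots,I^+_{\tilde n_+}$ be i.i.d. $\mathrm{Bernoulli}(p)$ and $I^-_1,\dots,I^-_{\tilde n_-}$ be i.i.d. $\mathrm{Bernoulli}(q)$. Let $\tilde X^+_1,\dots,\tilde X^+_{\tilde n_+}$ and $\tilde X^-_1,\dots,\tilde X^-_{\tilde n_-}$ be real random variables such that the pairs $(I^+_i,\tilde X^+_i)$, $i=1,\dots,\tilde n_+$, and $(I^-_j,\tilde X^-_j)$, $j=1,\dots,\tilde n_-$, are all mutually independent, and: conditional on $I^+_i=1$, $\tilde X^+_i\sim\mathcal N(\mu_1,\sigma^2)$, and conditional on $I^+_i=0$, $\tilde X^+_i\sim\mathcal N(\mu_2,\sigma^2)$; conditional on $I^-_j=1$, $\tilde X^-_j\sim\mathcal N(\mu_2,\sigma^2)$, and conditional on $I^-_j=0$, $\tilde X^-_j\sim\mathcal N(\mu_1,\sigma^2)$. Let $\Delta=p-q$ and $$\hat\theta=\frac12\Big(\frac{1}{\tilde n_+}\sum_{i=1}^{\tilde n_+}\tilde X^+_i+\frac{1}{\tilde n_-}\sum_{j=1}^{\tilde n_-}\tilde X^-_j\Big).$$ Then for every $\delta>0$, with probability at least $$1-2\exp\Big(-\frac{2\delta^2}{9\sigma^2}\cdot\frac{\tilde n_+\tilde n_-}{\tilde n_-+\tilde n_+}\Big)-2\exp\Big(-\frac{8\tilde n_+\delta^2}{9(\mu_1-\mu_2)^2}\Big)-2\exp\Big(-\frac{8\tilde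 n_-\delta^2}{9(\mu_1-\mu_2)^2}\Big),$$ we have $$\Big|\hat\theta-\frac{\mu_1+\mu_2}{2}-\frac{\Delta(\mu_1-\mu_2)}{2}\Big|\le\delta.$$
   Context: This models pseudo-labeling of unlabeled data for a binary problem where $X\mid Y=+1\sim\mathcal N(\mu_1,\sigma^2)$ and $X\mid Y=-1\sim\mathcal N(\mu_2,\sigma^2)$ (so the Bayes classifier thresholds at $(\mu_1+\mu_2)/2$). The $\tilde X^+_i$ are the unlabeled points assigned pseudo-label $+1$ by a base classifier that is correct on each with probability $p$ (indicator $I^+_i$), and the $\tilde X^-_j$ are those assigned pseudo-label $-1$, correct with probability $q$ (indicator $I^-_j$). *)

theory Defs
  imports "HOL-Probability.Probability"
begin

definition gauss_measure :: "real \<Rightarrow> real \<Rightarrow> real measure" where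
  "gauss_measure m s = density lborel (normal_density m s)"

end

theory Submission
  imports Defs
begin

text \<open>Centred at \<open>(mu1 + mu2) / 2 + (p - q) (mu1 - mu2) / 2\<close>, the estimator splits into
  \<open>(mu1 - mu2) / 2\<close> times the difference of the deviations of the two empirical label accuracies
  from \<open>p\<close> and \<open>q\<close>, plus a weighted sum of independent noises, each the deviation of a feature from
  the mean of its true class. Given its label a feature is Gaussian around that mean, so the noise sum
  is sub-Gaussian and a Chernoff bound keeps it below \<open>delta / 3\<close>; Hoeffding keeps both accuracy
  deviations below \<open>2 delta / (3 (mu1 - mu2))\<close>, and a union bound over the three bad events
  concludes.\<close>

lemma prob_space_gauss_measure: "s > 0 \<Longrightarrow> prob_space (gauss_measure m s)"
  unfolding gauss_measure_def by (rule prob_space_normal_density)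

lemma sets_gauss_measure [simp]: "sets (gauss_measure m s) = sets borel"
  by (simp add: gauss_measure_def)

lemma space_gauss_measure [simp]: "space (gauss_measure m s) = UNIV"
  by (simp add: gauss_measure_def)

lemma nn_integral_gauss_measure_exp:
  assumes "s > 0"
  shows "(\<integral>\<^sup>+x. ennreal (exp (l * (x - m))) \<partial>gauss_measure m s) = ennreal (exp (l\<^sup>2 * s\<^sup>2 / 2))"
proof -
  have square: "l * (x - m) - (x - m)\<^sup>2 / (2 * s\<^sup>2) = l\<^sup>2 * s\<^sup>2 / 2 - (x - (m + l * s\<^sup>2))\<^sup>2 / (2 * s\<^sup>2)" for x
    using assms by (simp add: field_simps power2_eq_square)
  have shift: "normal_density m s x * exp (l * (x - m)) = exp (l\<^sup>2 * s\<^sup>2 / 2) * normal_density (m + l * s\<^sup>2) s x" for x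
    unfolding normal_density_def by (simp add: mult_ac exp_add[symmetric] square)
  have "(\<integral>\<^sup>+x. ennreal (exp (l * (x - m))) \<partial>gauss_measure m s)
      = (\<integral>\<^sup>+x. ennreal (normal_density m s x * exp (l * (x - m))) \<partial>lborel)"
    unfolding gauss_measure_def by (simp add: nn_integral_density ennreal_mult)
  also have "\<dots> = ennreal (exp (l\<^sup>2 * s\<^sup>2 / 2)) * (\<integral>\<^sup>+x. ennreal (normal_density (m + l * s\<^sup>2) s x) \<partial>lborel)"
    unfolding shift by (simp add: ennreal_mult nn_integral_cmult)
  also have "(\<integral>\<^sup>+x. ennreal (normal_density (m + l * s\<^sup>2) s x) \<partial>lborel) = 1"
    using assms by (subst nn_integral_eq_integral) auto
  finally show ?thesis
    by simp
qed

lemma (in prob_space) nn_integral_on_event_scaled_law: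
  fixes B :: "'a \<Rightarrow> bool" and X :: "'a \<Rightarrow> real" and N :: "real measure"
  assumes [measurable]: "B \<in> measurable M (count_space UNIV)" "X \<in> borel_measurable M"
    and N: "finite_measure N" "sets N = sets borel" and c: "c \<ge> 0"
    and law: "\<And>A. A \<in> sets borel \<Longrightarrow> measure M {\<omega> \<in> space M. B \<omega> \<and> X \<omega> \<in> A} = c * measure N A"
    and f[measurable]: "f \<in> borel_measurable borel"
  shows "(\<integral>\<^sup>+\<omega>. f (X \<omega>) * indicator {\<omega> \<in> space M. B \<omega>} \<omega> \<partial>M) = ennreal c * (\<integral>\<^sup>+x. f x \<partial>N)"
proof -
  let ?E = "{\<omega> \<in> space M. B \<omega>}"
  have restricted_law: "distr (density M (indicator ?E)) borel X = scale_measure (ennreal c) N"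
  proof (rule measure_eqI)
    fix A assume "A \<in> sets (distr (density M (indicator ?E)) borel X)"
    then have [measurable]: "A \<in> sets borel" by simp
    have "emeasure (distr (density M (indicator ?E)) borel X) A
        = (\<integral>\<^sup>+\<omega>. indicator ?E \<omega> * indicator (X -` A \<inter> space M) \<omega> \<partial>M)"
      by (simp add: emeasure_distr emeasure_density)
    also have "\<dots> = (\<integral>\<^sup>+\<omega>. indicator {\<omega> \<in> space M. B \<omega> \<and> X \<omega> \<in> A} \<omega> \<partial>M)"
      by (intro nn_integral_cong) (auto split: split_indicator)
    also have "\<dots> = ennreal c * emeasure N A"
      using c by (simp add: emeasure_eq_measure law finite_measure.emeasure_eq_measure[OF N(1)] ennreal_mult)
    finally show "emeasure (distr (density M (indicator ?E)) borel X) A = emeasure (scale_measure (ennreal c) N) A"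
      by simp
  qed (simp add: N)
  have "(\<integral>\<^sup>+\<omega>. f (X \<omega>) * indicator ?E \<omega> \<partial>M) = (\<integral>\<^sup>+\<omega>. f (X \<omega>) \<partial>density M (indicator ?E))"
    by (simp add: nn_integral_density mult.commute)
  also have "\<dots> = (\<integral>\<^sup>+x. f x \<partial>distr (density M (indicator ?E)) borel X)"
    by (simp add: nn_integral_distr)
  also have "\<dots> = ennreal c * (\<integral>\<^sup>+x. f x \<partial>N)"
    unfolding restricted_law by (rule nn_integral_scale_measure) (simp add: measurable_cong_sets[OF N(2)])
  finally show ?thesis .
qed

lemma (in prob_space) gaussian_mixture_centred_mgf:
  fixes B :: "'a \<Rightarrow> bool" and X :: "'a \<Rightarrow> real"
  assumes B[measurable]: "B \<in> measurable M (count_space UNIV)" and X[measurable]: "X \<in> borel_measurable M"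
    and law1: "\<And>A. A \<in> sets borel \<Longrightarrow>
        measure M {\<omega> \<in> space M. B \<omega> \<and> X \<omega> \<in> A} = c * measure (gauss_measure m1 s) A"
    and law0: "\<And>A. A \<in> sets borel \<Longrightarrow>
        measure M {\<omega> \<in> space M. \<not> B \<omega> \<and> X \<omega> \<in> A} = (1 - c) * measure (gauss_measure m0 s) A"
    and c: "0 \<le> c" "c \<le> 1" and s: "s > 0"
  shows "(\<integral>\<^sup>+\<omega>. ennreal (exp (l * (X \<omega> - (if B \<omega> then m1 else m0)))) \<partial>M) = ennreal (exp (l\<^sup>2 * s\<^sup>2 / 2))"
proof -
  have gauss: "finite_measure (gauss_measure m s)" "sets (gauss_measure m s) = sets borel" for m
    using prob_space_gauss_measure[OF s] by (auto simp: prob_space.finite_measure)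
  have notB[measurable]: "(\<lambda>\<omega>. \<not> B \<omega>) \<in> measurable M (count_space UNIV)"
    by measurable
  let ?mgf = "ennreal (exp (l\<^sup>2 * s\<^sup>2 / 2))"
  have "(\<integral>\<^sup>+\<omega>. ennreal (exp (l * (X \<omega> - (if B \<omega> then m1 else m0)))) \<partial>M)
     = (\<integral>\<^sup>+\<omega>. ennreal (exp (l * (X \<omega> - m1))) * indicator {\<omega> \<in> space M. B \<omega>} \<omega>
          + ennreal (exp (l * (X \<omega> - m0))) * indicator {\<omega> \<in> space M. \<not> B \<omega>} \<omega> \<partial>M)"
    by (rule nn_integral_cong) (auto split: split_indicator)
  also have "\<dots> = (\<integral>\<^sup>+\<omega>. ennreal (exp (l * (X \<omega> - m1))) * indicator {\<omega> \<in> space M. B \<omega>} \<omega> \<partial>M)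
          + (\<integral>\<^sup>+\<omega>. ennreal (exp (l * (X \<omega> - m0))) * indicator {\<omega> \<in> space M. \<not> B \<omega>} \<omega> \<partial>M)"
    by (rule nn_integral_add) measurable
  also have "\<dots> = ennreal c * ?mgf + ennreal (1 - c) * ?mgf"
    using nn_integral_on_event_scaled_law[OF B X gauss c(1) law1, of "\<lambda>x. ennreal (exp (l * (x - m1)))"]
      nn_integral_on_event_scaled_law[OF notB X gauss _ law0, of "\<lambda>x. ennreal (exp (l * (x - m0)))"] c
    by (simp add: nn_integral_gauss_measure_exp s)
  also have "\<dots> = ?mgf"
    using c by (simp flip: distrib_right ennreal_plus)
  finally show ?thesis .
qed

lemma (in prob_space) subgaussian_sum_tail:
  fixes V :: "'i \<Rightarrow> 'a \<Rightarrow> real" and s :: "'i \<Rightarrow> real"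
  assumes "finite I" and indep: "indep_vars (\<lambda>_. borel) V I"
    and mgf: "\<And>i l. i \<in> I \<Longrightarrow> (\<integral>\<^sup>+\<omega>. ennreal (exp (l * V i \<omega>)) \<partial>M) \<le> ennreal (exp (l\<^sup>2 * (s i)\<^sup>2 / 2))"
    and pos: "(\<Sum>i\<in>I. (s i)\<^sup>2) > 0" and t: "t > 0"
  shows "prob {\<omega> \<in> space M. t \<le> (\<Sum>i\<in>I. V i \<omega>)} \<le> exp (- t\<^sup>2 / (2 * (\<Sum>i\<in>I. (s i)\<^sup>2)))"
proof -
  define v where "v = (\<Sum>i\<in>I. (s i)\<^sup>2)"
  define l where "l = t / v"
  have "v > 0" "l > 0"
    using pos t by (simp_all add: v_def l_def)
  have [measurable]: "i \<in> I \<Longrightarrow> random_variable borel (V i)" for i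
    using indep unfolding indep_vars_def by blast
  have "ennreal (prob {\<omega> \<in> space M. t \<le> (\<Sum>i\<in>I. V i \<omega>)})
      \<le> ennreal (exp (- l * t)) * (\<integral>\<^sup>+\<omega>\<in>space M. exp (l * (\<Sum>i\<in>I. V i \<omega>)) \<partial>M)"
    unfolding emeasure_eq_measure[symmetric]
    by (intro Chernoff_ineq_nn_integral_ge \<open>l > 0\<close>) (auto intro!: borel_measurable_sum)
  also have "(\<integral>\<^sup>+\<omega>\<in>space M. exp (l * (\<Sum>i\<in>I. V i \<omega>)) \<partial>M)
      = (\<integral>\<^sup>+\<omega>. (\<Prod>i\<in>I. ennreal (exp (l * V i \<omega>))) \<partial>M)"
    by (intro nn_integral_cong) (simp add: sum_distrib_left exp_sum \<open>finite I\<close> prod_ennreal)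
  also have "\<dots> = (\<Prod>i\<in>I. \<integral>\<^sup>+\<omega>. ennreal (exp (l * V i \<omega>)) \<partial>M)"
    by (intro indep_vars_nn_integral \<open>finite I\<close> indep_vars_compose2[OF indep]) auto
  also have "ennreal (exp (- l * t)) * \<dots> \<le> ennreal (exp (- l * t)) * (\<Prod>i\<in>I. ennreal (exp (l\<^sup>2 * (s i)\<^sup>2 / 2)))"
    by (intro mult_left_mono prod_mono_ennreal mgf) auto
  also have "\<dots> = ennreal (exp (- l * t) * (\<Prod>i\<in>I. exp (l\<^sup>2 * (s i)\<^sup>2 / 2)))"
    by (simp add: prod_ennreal prod_nonneg flip: ennreal_mult)
  also have "(\<Prod>i\<in>I. exp (l\<^sup>2 * (s i)\<^sup>2 / 2)) = exp (l\<^sup>2 * v / 2)"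
    unfolding exp_sum[OF \<open>finite I\<close>, symmetric] v_def by (simp add: sum_distrib_left sum_divide_distrib)
  also have "exp (- l * t) * exp (l\<^sup>2 * v / 2) = exp (- t\<^sup>2 / (2 * v))"
    unfolding exp_add[symmetric] using \<open>v > 0\<close> by (simp add: l_def field_simps power2_eq_square)
  finally show ?thesis
    by (simp add: v_def)
qed

lemma (in prob_space) subgaussian_sum_abs_tail:
  fixes V :: "'i \<Rightarrow> 'a \<Rightarrow> real" and s :: "'i \<Rightarrow> real"
  assumes fin: "finite I" and indep: "indep_vars (\<lambda>_. borel) V I"
    and mgf: "\<And>i l. i \<in> I \<Longrightarrow> (\<integral>\<^sup>+\<omega>. ennreal (exp (l * V i \<omega>)) \<partial>M) \<le> ennreal (exp (l\<^sup>2 * (s i)\<^sup>2 / 2))"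
    and pos: "(\<Sum>i\<in>I. (s i)\<^sup>2) > 0" and t: "t > 0"
  shows "prob {\<omega> \<in> space M. t \<le> \<bar>\<Sum>i\<in>I. V i \<omega>\<bar>} \<le> 2 * exp (- t\<^sup>2 / (2 * (\<Sum>i\<in>I. (s i)\<^sup>2)))"
proof -
  have [measurable]: "i \<in> I \<Longrightarrow> random_variable borel (V i)" for i
    using indep unfolding indep_vars_def by blast
  have indep_neg: "indep_vars (\<lambda>_. borel) (\<lambda>i \<omega>. - V i \<omega>) I"
    by (rule indep_vars_compose2[OF indep]) simp
  have upper: "prob {\<omega> \<in> space M. t \<le> (\<Sum>i\<in>I. V i \<omega>)} \<le> exp (- t\<^sup>2 / (2 * (\<Sum>i\<in>I. (s i)\<^sup>2)))"
    by (rule subgaussian_sum_tail[OF fin indep mgf pos t])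
  have lower: "prob {\<omega> \<in> space M. t \<le> (\<Sum>i\<in>I. - V i \<omega>)} \<le> exp (- t\<^sup>2 / (2 * (\<Sum>i\<in>I. (s i)\<^sup>2)))"
    by (rule subgaussian_sum_tail[OF fin indep_neg _ pos t]) (use mgf[of _ "- _"] in simp)
  have "prob {\<omega> \<in> space M. t \<le> \<bar>\<Sum>i\<in>I. V i \<omega>\<bar>}
      \<le> prob ({\<omega> \<in> space M. t \<le> (\<Sum>i\<in>I. V i \<omega>)} \<union> {\<omega> \<in> space M. t \<le> (\<Sum>i\<in>I. - V i \<omega>)})"
    by (intro finite_measure_mono) (auto simp: sum_negf abs_if split: if_splits)
  also have "\<dots> \<le> prob {\<omega> \<in> space M. t \<le> (\<Sum>i\<in>I. V i \<omega>)} + prob {\<omega> \<in> space M. t \<le> (\<Sum>i\<in>I. - V i \<omega>)}"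
    by (intro measure_Un_le) measurable
  finally show ?thesis
    using upper lower by linarith
qed

lemma (in prob_space) bernoulli_frequency_deviation:
  fixes B :: "'i \<Rightarrow> 'a \<Rightarrow> bool"
  assumes I: "card I = n" "n > 0" and indep: "indep_vars (\<lambda>_. count_space UNIV) B I"
    and p: "\<And>i. i \<in> I \<Longrightarrow> prob {\<omega> \<in> space M. B i \<omega>} = p" and "t \<ge> 0"
  shows "prob {\<omega> \<in> space M. t \<le> \<bar>(\<Sum>i\<in>I. of_bool (B i \<omega>)) / n - p\<bar>} \<le> 2 * exp (- 2 * real n * t\<^sup>2)"
proof -
  have "finite I"
    using I by (simp add: card_ge_0_finite)
  have [measurable]: "i \<in> I \<Longrightarrow> B i \<in> measurable M (count_space UNIV)" for i
    using indep unfolding indep_vars_def by blast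
  have mean: "expectation (\<lambda>\<omega>. of_bool (B i \<omega>)) = p" if "i \<in> I" for i
  proof -
    have "expectation (\<lambda>\<omega>. of_bool (B i \<omega>)) = expectation (indicator {\<omega> \<in> space M. B i \<omega>})"
      by (intro Bochner_Integration.integral_cong) (auto split: split_indicator)
    also have "\<dots> = p"
      using that by (simp add: p)
    finally show ?thesis .
  qed
  interpret Hoeffding_ineq M I "\<lambda>i \<omega>. of_bool (B i \<omega>)" "\<lambda>_. 0" "\<lambda>_. 1" "real (card I) * p"
  proof unfold_locales
    show "indep_vars (\<lambda>_. borel) (\<lambda>i \<omega>. of_bool (B i \<omega>)) I"
      by (rule indep_vars_compose2[OF indep]) simp
    show "real (card I) * p \<equiv> (\<Sum>i\<in>I. expectation (\<lambda>\<omega>. of_bool (B i \<omega>)))"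
      by (simp add: mean)
  qed (simp_all add: \<open>finite I\<close>)
  have "\<bar>S - real n * p\<bar> = real n * \<bar>S / n - p\<bar>" for S
  proof -
    have "S - real n * p = real n * (S / n - p)"
      using I by (simp add: field_simps)
    then show ?thesis
      using I by (simp only: abs_mult abs_of_pos of_nat_0_less_iff)
  qed
  then have "t \<le> \<bar>S / n - p\<bar> \<longleftrightarrow> real n * t \<le> \<bar>S - real n * p\<bar>" for S
    using I by simp
  then show ?thesis
    using Hoeffding_ineq_abs_ge[of "real n * t"] \<open>t \<ge> 0\<close> I by (simp add: power2_eq_square mult_ac)
qed

lemma (in prob_space) prob_ge_by_union_bound:
  assumes "E \<in> events" "A \<in> events" "B \<in> events" "C \<in> events" and "space M - E \<subseteq> A \<union> B \<union> C"
  shows "1 - (prob A + prob B + prob C) \<le> prob E"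
proof -
  have "1 - prob E = prob (space M - E)"
    using assms(1) by (simp add: prob_compl)
  also have "\<dots> \<le> prob (A \<union> B \<union> C)"
    using assms by (intro finite_measure_mono) auto
  also have "\<dots> \<le> prob A + prob B + prob C"
    using assms by (meson add_right_mono measure_Un_le order.trans sets.Un)
  finally show ?thesis
    by linarith
qed

locale pseudo_label_model = prob_space M for M :: "'a measure" +
  fixes mu1 mu2 sigma p q :: real and np nm :: nat
    and Ip Im :: "nat \<Rightarrow> 'a \<Rightarrow> bool" and Xp Xm :: "nat \<Rightarrow> 'a \<Rightarrow> real"
  assumes sigma_pos: "sigma > 0"
    and p: "0 \<le> p" "p \<le> 1" and q: "0 \<le> q" "q \<le> 1"
    and np_pos: "np > 0" and nm_pos: "nm > 0"
    and indep: "indep_vars (\<lambda>_. count_space UNIV \<Otimes>\<^sub>M borel)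
        (\<lambda>k \<omega>. case k of Inl i \<Rightarrow> (Ip i \<omega>, Xp i \<omega>) | Inr j \<Rightarrow> (Im j \<omega>, Xm j \<omega>))
        (Inl ` {..<np} \<union> Inr ` {..<nm})"
    and lawp1: "\<And>i A. i < np \<Longrightarrow> A \<in> sets borel \<Longrightarrow>
        measure M {\<omega> \<in> space M. Ip i \<omega> \<and> Xp i \<omega> \<in> A} = p * measure (gauss_measure mu1 sigma) A"
    and lawp0: "\<And>i A. i < np \<Longrightarrow> A \<in> sets borel \<Longrightarrow>
        measure M {\<omega> \<in> space M. \<not> Ip i \<omega> \<and> Xp i \<omega> \<in> A} = (1 - p) * measure (gauss_measure mu2 sigma) A"
    and lawm1: "\<And>j A. j < nm \<Longrightarrow> A \<in> sets borel \<Longrightarrow>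
        measure M {\<omega> \<in> space M. Im j \<omega> \<and> Xm j \<omega> \<in> A} = q * measure (gauss_measure mu2 sigma) A"
    and lawm0: "\<And>j A. j < nm \<Longrightarrow> A \<in> sets borel \<Longrightarrow>
        measure M {\<omega> \<in> space M. \<not> Im j \<omega> \<and> Xm j \<omega> \<in> A} = (1 - q) * measure (gauss_measure mu1 sigma) A"
begin

definition samples :: "(nat + nat) set" where
  "samples = Inl ` {..<np} \<union> Inr ` {..<nm}"

definition sample :: "nat + nat \<Rightarrow> 'a \<Rightarrow> bool \<times> real" where
  "sample k \<omega> = (case k of Inl i \<Rightarrow> (Ip i \<omega>, Xp i \<omega>) | Inr j \<Rightarrow> (Im j \<omega>, Xm j \<omega>))"

definition estimator :: "'a \<Rightarrow> real" where
  "estimator \<omega> = (1/2) * ((1 / real np) * (\<Sum>i<np. Xp i \<omega>) + (1 / real nm) * (\<Sum>j<nm. Xm j \<omega>))"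

definition pos_accuracy :: "'a \<Rightarrow> real" where
  "pos_accuracy \<omega> = (\<Sum>i<np. of_bool (Ip i \<omega>)) / np"

definition neg_accuracy :: "'a \<Rightarrow> real" where
  "neg_accuracy \<omega> = (\<Sum>j<nm. of_bool (Im j \<omega>)) / nm"

definition weight :: "nat + nat \<Rightarrow> real" where
  "weight k = (case k of Inl _ \<Rightarrow> 1 / (2 * real np) | Inr _ \<Rightarrow> 1 / (2 * real nm))"

text \<open>A sample with a positive pseudo-label (\<open>isl k\<close>) is in class \<open>+1\<close> iff its label is correct,
  one with a negative pseudo-label iff its label is wrong.\<close>

definition class_mean :: "nat + nat \<Rightarrow> bool \<Rightarrow> real" where
  "class_mean k b = (if b = isl k then mu1 else mu2)"

definition noise :: "nat + nat \<Rightarrow> 'a \<Rightarrow> real" where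
  "noise k \<omega> = weight k * (snd (sample k \<omega>) - class_mean k (fst (sample k \<omega>)))"

lemma finite_samples: "finite samples"
  by (simp add: samples_def)

lemma indep_samples: "indep_vars (\<lambda>_. count_space UNIV \<Otimes>\<^sub>M borel) sample samples"
  using indep unfolding sample_def[abs_def] samples_def .

lemma sample_measurable: "k \<in> samples \<Longrightarrow> sample k \<in> measurable M (count_space UNIV \<Otimes>\<^sub>M borel)"
  using indep_samples unfolding indep_vars_def by blast

lemma sample_components_measurable [measurable]:
  shows "i < np \<Longrightarrow> Ip i \<in> measurable M (count_space UNIV)"
    and "i < np \<Longrightarrow> Xp i \<in> borel_measurable M"
    and "j < nm \<Longrightarrow> Im j \<in> measurable M (count_space UNIV)"
    and "j < nm \<Longrightarrow> Xm j \<in> borel_measurable M"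
  using sample_measurable[of "Inl i"] sample_measurable[of "Inr j"]
  by (simp_all add: measurable_pair_iff samples_def sample_def o_def)

lemma accuracy_measurable [measurable]:
  "pos_accuracy \<in> borel_measurable M" "neg_accuracy \<in> borel_measurable M"
  unfolding pos_accuracy_def[abs_def] neg_accuracy_def[abs_def] by measurable

lemma estimator_measurable [measurable]: "estimator \<in> borel_measurable M"
  unfolding estimator_def[abs_def] by measurable

lemma indep_noise: "indep_vars (\<lambda>_. borel) noise samples"
  unfolding noise_def[abs_def] class_mean_def
  by (rule indep_vars_compose2[OF indep_samples]) measurable

lemma noise_measurable [measurable]: "k \<in> samples \<Longrightarrow> noise k \<in> borel_measurable M"
  using indep_noise unfolding indep_vars_def by blast

lemma accuracy_deviation:
  assumes "t \<ge> 0"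
  shows "prob {\<omega> \<in> space M. t \<le> \<bar>pos_accuracy \<omega> - p\<bar>} \<le> 2 * exp (- 2 * real np * t\<^sup>2)"
    and "prob {\<omega> \<in> space M. t \<le> \<bar>neg_accuracy \<omega> - q\<bar>} \<le> 2 * exp (- 2 * real nm * t\<^sup>2)"
proof -
  have indep_labels: "indep_vars (\<lambda>_. count_space UNIV) (\<lambda>k \<omega>. fst (sample k \<omega>)) K" if "K \<subseteq> samples" for K
    by (rule indep_vars_subset[OF indep_vars_compose2[OF indep_samples] that]) simp
  have labels_true: "prob {\<omega> \<in> space M. fst (sample k \<omega>)} = (case k of Inl _ \<Rightarrow> p | Inr _ \<Rightarrow> q)"
    if "k \<in> samples" for k
    using that lawp1[of _ UNIV] lawm1[of _ UNIV] prob_space.prob_space[OF prob_space_gauss_measure[OF sigma_pos]]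
    by (auto simp: samples_def sample_def)
  have "prob {\<omega> \<in> space M. t \<le> \<bar>(\<Sum>k\<in>Inl ` {..<np}. of_bool (fst (sample k \<omega>))) / np - p\<bar>}
      \<le> 2 * exp (- 2 * real np * t\<^sup>2)"
    by (rule bernoulli_frequency_deviation[OF _ np_pos indep_labels])
      (use labels_true assms in \<open>auto simp: samples_def card_image\<close>)
  then show "prob {\<omega> \<in> space M. t \<le> \<bar>pos_accuracy \<omega> - p\<bar>} \<le> 2 * exp (- 2 * real np * t\<^sup>2)"
    by (simp add: pos_accuracy_def sum.reindex sample_def del: sum_of_bool_eq)
  have "prob {\<omega> \<in> space M. t \<le> \<bar>(\<Sum>k\<in>Inr ` {..<nm}. of_bool (fst (sample k \<omega>))) / nm - q\<bar>}
      \<le> 2 * exp (- 2 * real nm * t\<^sup>2)"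
    by (rule bernoulli_frequency_deviation[OF _ nm_pos indep_labels])
      (use labels_true assms in \<open>auto simp: samples_def card_image\<close>)
  then show "prob {\<omega> \<in> space M. t \<le> \<bar>neg_accuracy \<omega> - q\<bar>} \<le> 2 * exp (- 2 * real nm * t\<^sup>2)"
    by (simp add: neg_accuracy_def sum.reindex sample_def del: sum_of_bool_eq)
qed

lemma noise_mgf:
  assumes "k \<in> samples"
  shows "(\<integral>\<^sup>+\<omega>. ennreal (exp (l * noise k \<omega>)) \<partial>M) = ennreal (exp (l\<^sup>2 * (sigma * weight k)\<^sup>2 / 2))"
proof -
  let ?l = "l * weight k"
  have "(\<integral>\<^sup>+\<omega>. ennreal (exp (?l * (snd (sample k \<omega>) - class_mean k (fst (sample k \<omega>))))) \<partial>M)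
      = ennreal (exp (?l\<^sup>2 * sigma\<^sup>2 / 2))"
  proof -
    from assms consider (pos) i where "k = Inl i" "i < np" | (neg) j where "k = Inr j" "j < nm"
      by (auto simp: samples_def)
    then show ?thesis
    proof cases
      case pos
      then have centred: "snd (sample k \<omega>) - class_mean k (fst (sample k \<omega>)) = Xp i \<omega> - (if Ip i \<omega> then mu1 else mu2)" for \<omega>
        by (simp add: sample_def class_mean_def)
      show ?thesis
        unfolding centred
        using gaussian_mixture_centred_mgf[OF sample_components_measurable(1,2)[OF \<open>i < np\<close>]
            lawp1[OF \<open>i < np\<close>] lawp0[OF \<open>i < np\<close>] p sigma_pos] .
    next
      case neg
      then have centred: "snd (sample k \<omega>) - class_mean k (fst (sample k \<omega>)) = Xm j \<omega> - (if Im j \<omega> then mu2 else mu1)" for \<omega>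
        by (simp add: sample_def class_mean_def)
      show ?thesis
        unfolding centred
        using gaussian_mixture_centred_mgf[OF sample_components_measurable(3,4)[OF \<open>j < nm\<close>]
            lawm1[OF \<open>j < nm\<close>] lawm0[OF \<open>j < nm\<close>] q sigma_pos] .
    qed
  qed
  then show ?thesis
    by (simp add: noise_def mult_ac power_mult_distrib)
qed

lemma noise_sum_abs_tail:
  assumes "t > 0"
  shows "prob {\<omega> \<in> space M. t \<le> \<bar>\<Sum>k\<in>samples. noise k \<omega>\<bar>}
    \<le> 2 * exp (- (2 * t\<^sup>2 / sigma\<^sup>2) * (real np * real nm / (real nm + real np)))"
proof -
  have "(\<Sum>k\<in>samples. (sigma * weight k)\<^sup>2)
      = (\<Sum>k\<in>Inl ` {..<np}. (sigma * weight k)\<^sup>2) + (\<Sum>k\<in>Inr ` {..<nm}. (sigma * weight k)\<^sup>2)"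
    unfolding samples_def by (rule sum.union_disjoint) auto
  also have "\<dots> = real np * (sigma / (2 * real np))\<^sup>2 + real nm * (sigma / (2 * real nm))\<^sup>2"
    by (simp add: sum.reindex weight_def)
  also have "\<dots> = sigma\<^sup>2 * (real nm + real np) / (4 * real np * real nm)"
    using np_pos nm_pos by (simp add: field_simps power2_eq_square)
  finally have variance_proxy:
    "(\<Sum>k\<in>samples. (sigma * weight k)\<^sup>2) = sigma\<^sup>2 * (real nm + real np) / (4 * real np * real nm)" .
  have "prob {\<omega> \<in> space M. t \<le> \<bar>\<Sum>k\<in>samples. noise k \<omega>\<bar>}
      \<le> 2 * exp (- t\<^sup>2 / (2 * (\<Sum>k\<in>samples. (sigma * weight k)\<^sup>2)))"
    using np_pos nm_pos sigma_pos
    by (intro subgaussian_sum_abs_tail finite_samples indep_noise order.eq_iff[THEN iffD1, THEN conjunct1] noise_mgf assms)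
      (simp_all add: variance_proxy)
  also have "- t\<^sup>2 / (2 * (\<Sum>k\<in>samples. (sigma * weight k)\<^sup>2))
      = - (2 * t\<^sup>2 / sigma\<^sup>2) * (real np * real nm / (real nm + real np))"
    unfolding variance_proxy using np_pos nm_pos sigma_pos by (simp add: divide_simps add_pos_pos)
  finally show ?thesis .
qed

lemma estimator_decomposition:
  "estimator \<omega> - (mu1 + mu2) / 2 - (p - q) * (mu1 - mu2) / 2
    = (mu1 - mu2) / 2 * ((pos_accuracy \<omega> - p) - (neg_accuracy \<omega> - q)) + (\<Sum>k\<in>samples. noise k \<omega>)"
proof -
  have noise_pos: "noise (Inl i) \<omega> = (Xp i \<omega> - mu2 - (mu1 - mu2) * of_bool (Ip i \<omega>)) / (2 * real np)" for i
    by (cases "Ip i \<omega>") (simp_all add: noise_def weight_def sample_def class_mean_def)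
  have noise_neg: "noise (Inr j) \<omega> = (Xm j \<omega> - mu1 + (mu1 - mu2) * of_bool (Im j \<omega>)) / (2 * real nm)" for j
    by (cases "Im j \<omega>") (simp_all add: noise_def weight_def sample_def class_mean_def)
  have "(\<Sum>k\<in>samples. noise k \<omega>) = (\<Sum>i<np. noise (Inl i) \<omega>) + (\<Sum>j<nm. noise (Inr j) \<omega>)"
    unfolding samples_def by (subst sum.union_disjoint) (auto simp: sum.reindex)
  also have "\<dots> = ((\<Sum>i<np. Xp i \<omega>) - np * mu2 - (mu1 - mu2) * (\<Sum>i<np. of_bool (Ip i \<omega>))) / (2 * real np)
      + ((\<Sum>j<nm. Xm j \<omega>) - nm * mu1 + (mu1 - mu2) * (\<Sum>j<nm. of_bool (Im j \<omega>))) / (2 * real nm)"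
    by (simp add: noise_pos noise_neg sum_divide_distrib[symmetric] sum_subtractf sum.distrib sum_distrib_left
        del: sum_of_bool_eq)
  finally have noise_sum: "(\<Sum>k\<in>samples. noise k \<omega>) = \<dots>" .
  show ?thesis
    unfolding noise_sum estimator_def pos_accuracy_def neg_accuracy_def using np_pos nm_pos
    by (simp add: field_simps del: sum_of_bool_eq)
qed

lemma estimator_deviation_union_bound:
  assumes "\<bar>mu1 - mu2\<bar> * t + s \<le> delta"
  shows "1 - (prob {\<omega> \<in> space M. t \<le> \<bar>pos_accuracy \<omega> - p\<bar>} + prob {\<omega> \<in> space M. t \<le> \<bar>neg_accuracy \<omega> - q\<bar>}
      + prob {\<omega> \<in> space M. s \<le> \<bar>\<Sum>k\<in>samples. noise k \<omega>\<bar>})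
    \<le> prob {\<omega> \<in> space M. \<bar>estimator \<omega> - (mu1 + mu2) / 2 - (p - q) * (mu1 - mu2) / 2\<bar> \<le> delta}"
proof (rule prob_ge_by_union_bound)
  have "\<bar>estimator \<omega> - (mu1 + mu2) / 2 - (p - q) * (mu1 - mu2) / 2\<bar> \<le> delta"
    if "\<not> t \<le> \<bar>pos_accuracy \<omega> - p\<bar>" "\<not> t \<le> \<bar>neg_accuracy \<omega> - q\<bar>" "\<not> s \<le> \<bar>\<Sum>k\<in>samples. noise k \<omega>\<bar>" for \<omega>
  proof -
    from that have small: "\<bar>pos_accuracy \<omega> - p\<bar> < t" "\<bar>neg_accuracy \<omega> - q\<bar> < t" "\<bar>\<Sum>k\<in>samples. noise k \<omega>\<bar> < s"
      by simp_all
    have "\<bar>(pos_accuracy \<omega> - p) - (neg_accuracy \<omega> - q)\<bar> \<le> 2 * t"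
      using small(1,2) abs_triangle_ineq4[of "pos_accuracy \<omega> - p" "neg_accuracy \<omega> - q"] by linarith
    then have "\<bar>mu1 - mu2\<bar> * \<bar>(pos_accuracy \<omega> - p) - (neg_accuracy \<omega> - q)\<bar> \<le> \<bar>mu1 - mu2\<bar> * (2 * t)"
      by (rule mult_left_mono) simp
    then have "\<bar>(mu1 - mu2) / 2 * ((pos_accuracy \<omega> - p) - (neg_accuracy \<omega> - q))\<bar> \<le> \<bar>mu1 - mu2\<bar> * t"
      by (simp add: abs_mult)
    moreover have "\<bar>estimator \<omega> - (mu1 + mu2) / 2 - (p - q) * (mu1 - mu2) / 2\<bar>
        \<le> \<bar>(mu1 - mu2) / 2 * ((pos_accuracy \<omega> - p) - (neg_accuracy \<omega> - q))\<bar> + \<bar>\<Sum>k\<in>samples. noise k \<omega>\<bar>"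
      unfolding estimator_decomposition by (rule abs_triangle_ineq)
    ultimately show ?thesis
      using small(3) assms by linarith
  qed
  then show "space M - {\<omega> \<in> space M. \<bar>estimator \<omega> - (mu1 + mu2) / 2 - (p - q) * (mu1 - mu2) / 2\<bar> \<le> delta}
    \<subseteq> {\<omega> \<in> space M. t \<le> \<bar>pos_accuracy \<omega> - p\<bar>} \<union> {\<omega> \<in> space M. t \<le> \<bar>neg_accuracy \<omega> - q\<bar>}
      \<union> {\<omega> \<in> space M. s \<le> \<bar>\<Sum>k\<in>samples. noise k \<omega>\<bar>}"
    by blast
qed measurable

end

theorem theorem1:
  fixes M :: "'a measure"
    and mu1 mu2 sigma p q delta :: real
    and np nm :: nat
    and Ip Im :: "nat \<Rightarrow> 'a \<Rightarrow> bool"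
    and Xp Xm :: "nat \<Rightarrow> 'a \<Rightarrow> real"
  assumes "prob_space M"
    and "mu1 > mu2" and "sigma > 0"
    and "0 \<le> p" and "p \<le> 1" and "0 \<le> q" and "q \<le> 1"
    and "np > 0" and "nm > 0"
    and indep: "prob_space.indep_vars M (\<lambda>_. count_space UNIV \<Otimes>\<^sub>M borel)
        (\<lambda>k \<omega>. case k of Inl i \<Rightarrow> (Ip i \<omega>, Xp i \<omega>) | Inr j \<Rightarrow> (Im j \<omega>, Xm j \<omega>))
        (Inl ` {..<np} \<union> Inr ` {..<nm})"
    and lawp1: "\<And>i A. i < np \<Longrightarrow> A \<in> sets borel \<Longrightarrow>
        measure M {\<omega> \<in> space M. Ip i \<omega> \<and> Xp i \<omega> \<in> A} = p * measure (gauss_measure mu1 sigma) A"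
    and lawp0: "\<And>i A. i < np \<Longrightarrow> A \<in> sets borel \<Longrightarrow>
        measure M {\<omega> \<in> space M. \<not> Ip i \<omega> \<and> Xp i \<omega> \<in> A} = (1 - p) * measure (gauss_measure mu2 sigma) A"
    and lawm1: "\<And>j A. j < nm \<Longrightarrow> A \<in> sets borel \<Longrightarrow>
        measure M {\<omega> \<in> space M. Im j \<omega> \<and> Xm j \<omega> \<in> A} = q * measure (gauss_measure mu2 sigma) A"
    and lawm0: "\<And>j A. j < nm \<Longrightarrow> A \<in> sets borel \<Longrightarrow>
        measure M {\<omega> \<in> space M. \<not> Im j \<omega> \<and> Xm j \<omega> \<in> A} = (1 - q) * measure (gauss_measure mu1 sigma) A"
    and "delta > 0"
  shows "measure M {\<omega> \<in> space M.
      \<bar>(1/2) * ((1 / real np) * (\<Sum>i<np. Xp i \<omega>) + (1 / real nm) * (\<Sum>j<nm. Xm j \<omega>))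
        - (mu1 + mu2) / 2 - (p - q) * (mu1 - mu2) / 2\<bar> \<le> delta}
    \<ge> 1 - 2 * exp (- (2 * delta^2 / (9 * sigma^2)) * (real np * real nm / (real nm + real np)))
        - 2 * exp (- (8 * real np * delta^2 / (9 * (mu1 - mu2)^2)))
        - 2 * exp (- (8 * real nm * delta^2 / (9 * (mu1 - mu2)^2)))"
proof -
  interpret pseudo_label_model M mu1 mu2 sigma p q np nm Ip Im Xp Xm
    by (intro pseudo_label_model.intro pseudo_label_model_axioms.intro) (fact assms)+
  define t where "t = 2 * delta / (3 * (mu1 - mu2))"
  have "t \<ge> 0" and "\<bar>mu1 - mu2\<bar> * t + delta / 3 \<le> delta" and "delta / 3 > 0"
    using \<open>delta > 0\<close> \<open>mu1 > mu2\<close> by (simp_all add: t_def field_simps)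
  have accuracy_exponent: "- 2 * real n * t\<^sup>2 = - (8 * real n * delta\<^sup>2 / (9 * (mu1 - mu2)\<^sup>2))" for n
    unfolding t_def power_divide power_mult_distrib by simp
  have noise_exponent: "2 * (delta / 3)\<^sup>2 / sigma\<^sup>2 = 2 * delta\<^sup>2 / (9 * sigma\<^sup>2)"
    by (simp add: power_divide)
  show ?thesis
    using estimator_deviation_union_bound[OF \<open>\<bar>mu1 - mu2\<bar> * t + delta / 3 \<le> delta\<close>]
      accuracy_deviation[OF \<open>t \<ge> 0\<close>] noise_sum_abs_tail[OF \<open>delta / 3 > 0\<close>]
    unfolding estimator_def accuracy_exponent noise_exponent by linarith
qed

end
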